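(* Let $A\in\mathbb{R}^{n\times n}$ be nonsingular with $A\geq 0$ and $A^{-1}\geq 0$, and let $(U_k^{(i)},V_k^{(i)},E_k)_{k=1}^{p}$, $i=1,2$, be two weak regular multisplittings of $A$ (with the same weighting matrices $E_k$). If $V_k^{(2)}\geq V_k^{(1)}$ for each $k=1,\ldots,p$, then $\rho(H_1)\leq\rho(H_2)<1$, where $H_i=\sum_{k=1}^{p}E_k[U_k^{(i)}]^{-1}V_k^{(i)}$ for $i=1,2$.
   Context: Inequalities are entrywise; $\rho(\cdot)$ is the spectral radius. A splitting $A=U-V$ of $A\in\mathbb{R}^{n\times n}$ is weak regular if $U$ is nonsingular, $U^{-1}\geq 0$ and $U^{-1}V\geq 0$. A weak regular multisplitting of $A$ is a triplet $(U_k,V_k,E_k)_{k=1}^{p}$ where each $A=U_k-V_k$ is a weak regular splitting and each $E_k\geq 0$ is an $n\times n$ diagonal matrix with $\sum_{k=1}^{p}E_k=I$. *)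

theory Defs
  imports "Jordan_Normal_Form.Spectral_Radius"
begin

text \<open>Real n x n matrices are JNF matrices in carrier_mat n n. Inequalities between
matrices are entrywise (the library order on mat).\<close>

definition nonneg_mat :: "real mat \<Rightarrow> bool" where
  "nonneg_mat A \<longleftrightarrow> (\<forall>i < dim_row A. \<forall>j < dim_col A. A $$ (i, j) \<ge> 0)"

definition inv_mat :: "real mat \<Rightarrow> real mat" where
  "inv_mat A = (SOME B. inverts_mat A B \<and> inverts_mat B A)"

definition rho :: "real mat \<Rightarrow> real" where
  "rho A = spectral_radius (map_mat complex_of_real A)"

definition weak_regular_splitting :: "nat \<Rightarrow> real mat \<Rightarrow> real mat \<Rightarrow> real mat \<Rightarrow> bool" where
  "weak_regular_splitting n A U V \<longleftrightarrow>
     A \<in> carrier_mat n n \<and> U \<in> carrier_mat n n \<and> V \<in> carrier_mat n n \<and>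
     A = U - V \<and> invertible_mat U \<and> nonneg_mat (inv_mat U) \<and> nonneg_mat (inv_mat U * V)"

fun msum :: "nat \<Rightarrow> (nat \<Rightarrow> real mat) \<Rightarrow> nat \<Rightarrow> real mat" where
  "msum n f 0 = 0\<^sub>m n n"
| "msum n f (Suc p) = msum n f p + f p"

text \<open>Weak regular multisplitting (U_k, V_k, E_k), k = 0..p-1 (i.e. k = 1..p in the paper).\<close>
definition weak_regular_multisplitting ::
  "nat \<Rightarrow> real mat \<Rightarrow> nat \<Rightarrow> (nat \<Rightarrow> real mat) \<Rightarrow> (nat \<Rightarrow> real mat) \<Rightarrow> (nat \<Rightarrow> real mat) \<Rightarrow> bool" where
  "weak_regular_multisplitting n A p U V E \<longleftrightarrow>
     (\<forall>k < p. weak_regular_splitting n A (U k) (V k) \<and>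
              E k \<in> carrier_mat n n \<and> diagonal_mat (E k) \<and> nonneg_mat (E k)) \<and>
     msum n E p = 1\<^sub>m n"

definition iter_mat :: "nat \<Rightarrow> nat \<Rightarrow> (nat \<Rightarrow> real mat) \<Rightarrow> (nat \<Rightarrow> real mat) \<Rightarrow> (nat \<Rightarrow> real mat) \<Rightarrow> real mat" where
  "iter_mat n p U V E = msum n (\<lambda>k. E k * (inv_mat (U k) * V k)) p"

end

theory Submission
  imports Defs
begin

text \<open>For a weak regular splitting $A = U - V$ one has $U^{-1}V = I - U^{-1}A$, and
$U_1^{-1} - U_2^{-1} = U_1^{-1}(U_2 - U_1)U_2^{-1} \ge 0$ when $V_2 \ge V_1$. Multiplying by
$A \ge 0$ gives $0 \le H_1 \le H_2$ entrywise, and the spectral radius is monotone on nonnegative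
matrices: the moduli of an eigenvector of $H_1$ for $\rho(H_1)$ form a nonnegative vector $w$ with
$\rho(H_1)\, w \le H_2 w$, which is impossible if $\rho(H_2) < \rho(H_1)$ because the powers of
$H_2 / r$ stay bounded for $\rho(H_2) < r$. For the positive vector $x = A^{-1}e$ one finds
$H_2 x = x - \sum_k E_k U_k^{-1} e < x$, and an eigenvector of $H_2$ compared against $x$ shows
$\rho(H_2) < 1$.\<close>

section \<open>Entrywise matrix facts\<close>

lemma index_mult_mat_vec_sum:
  "A \<in> carrier_mat n m \<Longrightarrow> v \<in> carrier_vec m \<Longrightarrow> i < n \<Longrightarrow>
   (A *\<^sub>v v) $ i = (\<Sum>j\<in>{0..<m}. A $$ (i, j) * v $ j)"
  by (simp add: scalar_prod_def)

lemma index_mult_mat_sum: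
  "A \<in> carrier_mat n m \<Longrightarrow> B \<in> carrier_mat m l \<Longrightarrow> i < n \<Longrightarrow> j < l \<Longrightarrow>
   (A * B) $$ (i, j) = (\<Sum>k\<in>{0..<m}. A $$ (i, k) * B $$ (k, j))"
  by (simp add: scalar_prod_def)

lemma nonneg_matD:
  "nonneg_mat A \<Longrightarrow> A \<in> carrier_mat n m \<Longrightarrow> i < n \<Longrightarrow> j < m \<Longrightarrow> A $$ (i, j) \<ge> 0"
  unfolding nonneg_mat_def by auto

lemma nonneg_mat_mult:
  assumes "A \<in> carrier_mat n m" "B \<in> carrier_mat m l" "nonneg_mat A" "nonneg_mat B"
  shows "nonneg_mat (A * B)"
  unfolding nonneg_mat_def
proof (intro allI impI)
  fix i j assume "i < dim_row (A * B)" "j < dim_col (A * B)"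
  then show "(A * B) $$ (i, j) \<ge> 0"
    using assms unfolding nonneg_mat_def
    by (subst index_mult_mat_sum[OF assms(1,2)]) (auto intro!: sum_nonneg)
qed

lemma nonneg_mat_pow:
  assumes "C \<in> carrier_mat n n" "nonneg_mat C"
  shows "nonneg_mat (C ^\<^sub>m k)"
proof (induction k)
  case 0
  then show ?case using assms(1) unfolding nonneg_mat_def by auto
next
  case (Suc k)
  then show ?case using nonneg_mat_mult[OF pow_carrier_mat[OF assms(1)] assms(1) Suc.IH assms(2)]
    by simp
qed

lemma less_eq_matD:
  "A \<le> B \<Longrightarrow> i < dim_row A \<Longrightarrow> j < dim_col A \<Longrightarrow> A $$ (i, j) \<le> B $$ (i, j)"
  unfolding less_eq_mat_def by auto

lemma less_eq_matI:
  "A \<in> carrier_mat n m \<Longrightarrow> B \<in> carrier_mat n m \<Longrightarrow>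
   (\<And>i j. i < n \<Longrightarrow> j < m \<Longrightarrow> A $$ (i, j) \<le> B $$ (i, j)) \<Longrightarrow> A \<le> B"
  unfolding less_eq_mat_def by auto

lemma nonneg_mat_if_le:
  assumes le: "B \<le> C" and nonneg: "nonneg_mat B"
  shows "nonneg_mat C"
  unfolding nonneg_mat_def
proof (intro allI impI)
  fix i j assume "i < dim_row C" "j < dim_col C"
  moreover have "dim_row B = dim_row C" "dim_col B = dim_col C"
    using le unfolding less_eq_mat_def by auto
  moreover note nonneg[unfolded nonneg_mat_def, rule_format, of i j] less_eq_matD[OF le, of i j]
  ultimately show "C $$ (i, j) \<ge> 0" by linarith
qed

lemma inv_mat_inverse:
  assumes "invertible_mat U" "U \<in> carrier_mat n n"
  shows "inv_mat U \<in> carrier_mat n n" "U * inv_mat U = 1\<^sub>m n" "inv_mat U * U = 1\<^sub>m n"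
proof -
  have "inverts_mat U (inv_mat U) \<and> inverts_mat (inv_mat U) U"
    unfolding inv_mat_def by (rule someI_ex) (use assms(1) in \<open>auto simp: invertible_mat_def\<close>)
  then have right: "U * inv_mat U = 1\<^sub>m n"
    and left: "inv_mat U * U = 1\<^sub>m (dim_row (inv_mat U))"
    using assms(2) unfolding inverts_mat_def by auto
  have "dim_col (inv_mat U) = n" using arg_cong[OF right, of dim_col] by simp
  moreover have "dim_row (inv_mat U) = n" using arg_cong[OF left, of dim_col] assms(2) by simp
  ultimately show carrier: "inv_mat U \<in> carrier_mat n n" by auto
  show "U * inv_mat U = 1\<^sub>m n" by (fact right)
  show "inv_mat U * U = 1\<^sub>m n" using left carrier by simp
qed

text \<open>A zero row of $W$ would give a zero diagonal entry of $W Z = I$.\<close>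

lemma nonneg_mat_row_sum_pos:
  assumes W: "W \<in> carrier_mat n n" and Z: "Z \<in> carrier_mat n n" and WZ: "W * Z = 1\<^sub>m n"
    and nonneg: "nonneg_mat W" and i: "i < n"
  shows "(W *\<^sub>v vec n (\<lambda>_. 1)) $ i > 0"
proof -
  have entries: "\<And>j. j < n \<Longrightarrow> W $$ (i, j) \<ge> 0" by (rule nonneg_matD[OF nonneg W i])
  have row_sum: "(W *\<^sub>v vec n (\<lambda>_. 1)) $ i = (\<Sum>j\<in>{0..<n}. W $$ (i, j))"
    using index_mult_mat_vec_sum[OF W _ i, of "vec n (\<lambda>_. 1)"] by simp
  have "(W *\<^sub>v vec n (\<lambda>_. 1)) $ i \<noteq> 0"
  proof
    assume "(W *\<^sub>v vec n (\<lambda>_. 1)) $ i = 0"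
    then have "\<forall>j\<in>{0..<n}. W $$ (i, j) = 0"
      using row_sum entries sum_nonneg_eq_0_iff[of "{0..<n}" "\<lambda>j. W $$ (i, j)"] by auto
    then have "(W * Z) $$ (i, i) = 0" using index_mult_mat_sum[OF W Z i i] by simp
    then show False using WZ i by simp
  qed
  moreover have "(W *\<^sub>v vec n (\<lambda>_. 1)) $ i \<ge> 0" using row_sum entries by (auto intro: sum_nonneg)
  ultimately show ?thesis by linarith
qed

lemma msum_carrier:
  "(\<And>k. k < p \<Longrightarrow> f k \<in> carrier_mat n n) \<Longrightarrow> msum n f p \<in> carrier_mat n n"
  by (induction p) auto

lemma index_msum:
  "(\<And>k. k < p \<Longrightarrow> f k \<in> carrier_mat n n) \<Longrightarrow> i < n \<Longrightarrow> j < n \<Longrightarrow>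
   msum n f p $$ (i, j) = (\<Sum>k<p. f k $$ (i, j))"
proof (induction p)
  case (Suc p)
  then have "dim_row (f p) = n" "dim_col (f p) = n" "msum n f p \<in> carrier_mat n n"
    by (auto intro: msum_carrier)
  with Suc show ?case by simp
qed simp

lemma index_mult_diagonal_mat:
  assumes D: "D \<in> carrier_mat n n" "diagonal_mat D" and B: "B \<in> carrier_mat n m"
    and i: "i < n" and j: "j < m"
  shows "(D * B) $$ (i, j) = D $$ (i, i) * B $$ (i, j)"
proof -
  have "(D * B) $$ (i, j) = (\<Sum>k\<in>{0..<n}. D $$ (i, k) * B $$ (k, j))"
    by (rule index_mult_mat_sum[OF D(1) B i j])
  also have "\<dots> = (\<Sum>k\<in>{0..<n}. if k = i then D $$ (i, i) * B $$ (i, j) else 0)"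
    using D i by (intro sum.cong) (auto simp: diagonal_mat_def)
  finally show ?thesis using i by simp
qed

section \<open>Spectral radius of nonnegative matrices\<close>

lemma rho_eigenvector:
  assumes "H \<in> carrier_mat n n" "n > 0"
  obtains l v where "rho H = cmod l" "v \<in> carrier_vec n" "v \<noteq> 0\<^sub>v n"
    "map_mat complex_of_real H *\<^sub>v v = l \<cdot>\<^sub>v v"
proof -
  have H: "map_mat complex_of_real H \<in> carrier_mat n n" using assms(1) by auto
  obtain l where "l \<in> spectrum (map_mat complex_of_real H)" "rho H = cmod l"
    using spectral_radius_mem_max(1)[OF H assms(2)] unfolding rho_def by auto
  with H that show ?thesis unfolding spectrum_def eigenvalue_def eigenvector_def by auto
qed

lemma rho_nonneg:
  assumes "H \<in> carrier_mat n n" "n > 0"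
  shows "rho H \<ge> 0"
proof -
  obtain l where "rho H = cmod l" using rho_eigenvector[OF assms] by blast
  then show ?thesis by simp
qed

lemma nonzero_vec_entry:
  assumes "v \<in> carrier_vec n" "v \<noteq> 0\<^sub>v n"
  obtains j where "j < n" "v $ j \<noteq> 0"
  using assms by (metis carrier_vecD eq_vecI index_zero_vec(1,2))

lemma norm_eigenvalue_mult_le:
  assumes H: "H \<in> carrier_mat n n" and nonneg: "nonneg_mat H" and v: "v \<in> carrier_vec n"
    and ev: "map_mat complex_of_real H *\<^sub>v v = l \<cdot>\<^sub>v v" and i: "i < n"
  shows "cmod l * cmod (v $ i) \<le> (\<Sum>j\<in>{0..<n}. H $$ (i, j) * cmod (v $ j))"
proof -
  have "cmod l * cmod (v $ i) = cmod ((map_mat complex_of_real H *\<^sub>v v) $ i)"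
    using ev v i by (simp add: norm_mult)
  also have "\<dots> = cmod (\<Sum>j\<in>{0..<n}. complex_of_real (H $$ (i, j)) * v $ j)"
    using index_mult_mat_vec_sum[of "map_mat complex_of_real H" n n v i] H v i by simp
  also have "\<dots> \<le> (\<Sum>j\<in>{0..<n}. cmod (complex_of_real (H $$ (i, j)) * v $ j))"
    by (rule norm_sum)
  also have "\<dots> = (\<Sum>j\<in>{0..<n}. H $$ (i, j) * cmod (v $ j))"
    using nonneg_matD[OF nonneg H i] by (intro sum.cong) (auto simp: norm_mult)
  finally show ?thesis .
qed

lemma rho_smult_le:
  assumes C: "C \<in> carrier_mat n n" and n: "n > 0" and c: "c > 0"
  shows "rho (c \<cdot>\<^sub>m C) \<le> c * rho C"
proof -
  obtain l v where rho: "rho (c \<cdot>\<^sub>m C) = cmod l" and v: "v \<in> carrier_vec n" "v \<noteq> 0\<^sub>v n"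
    and ev: "map_mat complex_of_real (c \<cdot>\<^sub>m C) *\<^sub>v v = l \<cdot>\<^sub>v v"
    using rho_eigenvector[of "c \<cdot>\<^sub>m C" n] C n by auto
  let ?M = "map_mat complex_of_real C"
  have M: "?M \<in> carrier_mat n n" using C by auto
  have "?M *\<^sub>v v = (l / of_real c) \<cdot>\<^sub>v v"
  proof (rule eq_vecI)
    fix i assume "i < dim_vec ((l / of_real c) \<cdot>\<^sub>v v)"
    then have i: "i < n" using v by auto
    have "of_real c * (?M *\<^sub>v v) $ i = (map_mat complex_of_real (c \<cdot>\<^sub>m C) *\<^sub>v v) $ i"
      using index_mult_mat_vec_sum[OF M v(1) i]
        index_mult_mat_vec_sum[of "map_mat complex_of_real (c \<cdot>\<^sub>m C)" n n v i] C i v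
      by (simp add: sum_distrib_left algebra_simps)
    then show "(?M *\<^sub>v v) $ i = ((l / of_real c) \<cdot>\<^sub>v v) $ i"
      using ev c v i by (simp add: field_simps)
  qed (use v M in auto)
  then have "l / of_real c \<in> spectrum ?M"
    using v M unfolding spectrum_def eigenvalue_def eigenvector_def by auto
  then have "cmod (l / of_real c) \<le> rho C"
    using spectral_radius_mem_max(2)[OF M n] unfolding rho_def by auto
  then have "cmod l / c \<le> rho C" using c by (simp add: norm_divide)
  then show ?thesis using rho c by (simp add: divide_le_eq mult.commute)
qed

lemma nonneg_mat_pow_mult_vec_ge:
  assumes C: "C \<in> carrier_mat n n" and nonneg: "nonneg_mat C" and w: "w \<in> carrier_vec n"
    and a: "a \<ge> 0" and sub: "\<And>i. i < n \<Longrightarrow> a * w $ i \<le> (C *\<^sub>v w) $ i" and i: "i < n"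
  shows "a ^ k * w $ i \<le> (C ^\<^sub>m k *\<^sub>v w) $ i"
  using i
proof (induction k arbitrary: i)
  case 0
  then show ?case using C w by simp
next
  case (Suc k)
  have Ck: "C ^\<^sub>m k \<in> carrier_mat n n" using C by simp
  have Cw: "C *\<^sub>v w \<in> carrier_vec n" using C w by simp
  have "a ^ Suc k * w $ i = a * (a ^ k * w $ i)" by simp
  also have "\<dots> \<le> a * (C ^\<^sub>m k *\<^sub>v w) $ i"
    using Suc a by (simp add: mult_left_mono)
  also have "\<dots> = (\<Sum>j\<in>{0..<n}. (C ^\<^sub>m k) $$ (i, j) * (a * w $ j))"
    by (simp add: index_mult_mat_vec_sum[OF Ck w Suc.prems] sum_distrib_left algebra_simps)
  also have "\<dots> \<le> (\<Sum>j\<in>{0..<n}. (C ^\<^sub>m k) $$ (i, j) * (C *\<^sub>v w) $ j)"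
    using nonneg_matD[OF nonneg_mat_pow[OF C nonneg] Ck Suc.prems] sub
    by (intro sum_mono mult_left_mono) auto
  also have "\<dots> = (C ^\<^sub>m k *\<^sub>v (C *\<^sub>v w)) $ i"
    by (rule index_mult_mat_vec_sum[OF Ck Cw Suc.prems, symmetric])
  also have "\<dots> = (C ^\<^sub>m Suc k *\<^sub>v w) $ i" using assoc_mult_mat_vec[OF Ck C w] by simp
  finally show ?case .
qed

text \<open>Lower Collatz--Wielandt bound. If $\rho(C) < r < a$, the powers of $C/r$ are bounded
(Jordan normal form), while by the subinvariance they grow like $(a/r)^k$ on the support of $w$.\<close>

lemma subinvariant_le_rho:
  assumes C: "C \<in> carrier_mat n n" and n: "n > 0" and nonneg: "nonneg_mat C"
    and w: "w \<in> carrier_vec n" and w_nonneg: "\<And>i. i < n \<Longrightarrow> w $ i \<ge> 0"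
    and i0: "i0 < n" "w $ i0 > 0" and a: "a \<ge> 0"
    and sub: "\<And>i. i < n \<Longrightarrow> a * w $ i \<le> (C *\<^sub>v w) $ i"
  shows "a \<le> rho C"
proof (rule ccontr)
  assume "\<not> a \<le> rho C"
  moreover have "rho C \<ge> 0" by (rule rho_nonneg[OF C n])
  moreover define r where "r = (rho C + a) / 2"
  ultimately have r: "r > 0" "rho C < r" "r < a" by auto
  define Cr where "Cr = (1 / r) \<cdot>\<^sub>m C"
  have Cr: "Cr \<in> carrier_mat n n" using C unfolding Cr_def by auto
  have "rho Cr \<le> (1 / r) * rho C" unfolding Cr_def by (rule rho_smult_le[OF C n]) (use r in auto)
  also have "\<dots> < 1" using r by (simp add: field_simps)
  finally obtain c where c: "\<And>k. norm_bound (map_mat complex_of_real Cr ^\<^sub>m k) c"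
    using spectral_radius_jnf_norm_bound_less_1_upper_triangular[of "map_mat complex_of_real Cr" n] Cr
    unfolding rho_def by fastforce
  have bound: "(Cr ^\<^sub>m k) $$ (i0, j) \<le> c" if "j < n" for k j
  proof -
    have "map_mat complex_of_real Cr ^\<^sub>m k = map_mat complex_of_real (Cr ^\<^sub>m k)"
      by (rule of_real_hom.mat_hom_pow[OF Cr, symmetric])
    then have "cmod (complex_of_real ((Cr ^\<^sub>m k) $$ (i0, j))) \<le> c"
      using c[of k] Cr i0(1) that unfolding norm_bound_def by auto
    then show ?thesis by simp
  qed
  have sub_r: "(a / r) * w $ i \<le> (Cr *\<^sub>v w) $ i" if i: "i < n" for i
  proof -
    have "(Cr *\<^sub>v w) $ i = (1 / r) * (C *\<^sub>v w) $ i"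
      unfolding Cr_def using index_mult_mat_vec_sum[OF C w i]
        index_mult_mat_vec_sum[of "(1 / r) \<cdot>\<^sub>m C" n n w i] C i w
      by (simp add: sum_distrib_left algebra_simps)
    then show ?thesis using sub[OF i] r by (simp add: divide_right_mono)
  qed
  have nonneg_r: "nonneg_mat Cr" using nonneg r unfolding Cr_def nonneg_mat_def by auto
  have growth: "(a / r) ^ k \<le> c * (\<Sum>j\<in>{0..<n}. w $ j) / w $ i0" for k
  proof -
    have "(a / r) ^ k * w $ i0 \<le> (Cr ^\<^sub>m k *\<^sub>v w) $ i0"
      by (rule nonneg_mat_pow_mult_vec_ge[OF Cr nonneg_r w _ sub_r i0(1)]) (use a r in auto)
    also have "\<dots> = (\<Sum>j\<in>{0..<n}. (Cr ^\<^sub>m k) $$ (i0, j) * w $ j)"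
      by (rule index_mult_mat_vec_sum[OF pow_carrier_mat[OF Cr] w i0(1)])
    also have "\<dots> \<le> (\<Sum>j\<in>{0..<n}. c * w $ j)"
      using bound w_nonneg by (intro sum_mono mult_right_mono) auto
    finally show ?thesis using i0 by (simp add: le_divide_eq sum_distrib_left)
  qed
  have "1 < a / r" using r by simp
  then obtain k where "c * (\<Sum>j\<in>{0..<n}. w $ j) / w $ i0 < (a / r) ^ k"
    using real_arch_pow by blast
  with growth[of k] show False by simp
qed

lemma rho_mono:
  assumes B: "B \<in> carrier_mat n n" and n: "n > 0" and nonneg: "nonneg_mat B" and le: "B \<le> C"
  shows "rho B \<le> rho C"
proof -
  have C: "C \<in> carrier_mat n n" using le B unfolding less_eq_mat_def by auto
  have le_entry: "B $$ (i, j) \<le> C $$ (i, j)" if "i < n" "j < n" for i j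
    using less_eq_matD[OF le] B that by auto
  obtain l v where rho: "rho B = cmod l" and v: "v \<in> carrier_vec n" "v \<noteq> 0\<^sub>v n"
    and ev: "map_mat complex_of_real B *\<^sub>v v = l \<cdot>\<^sub>v v" using rho_eigenvector[OF B n] by blast
  obtain j where j: "j < n" "v $ j \<noteq> 0" using nonzero_vec_entry[OF v] by blast
  define w where "w = vec n (\<lambda>i. cmod (v $ i))"
  have w: "w \<in> carrier_vec n" unfolding w_def by simp
  show ?thesis unfolding rho
  proof (rule subinvariant_le_rho[OF C n nonneg_mat_if_le[OF le nonneg] w _ j(1)])
    fix i assume i: "i < n"
    have "cmod l * w $ i \<le> (\<Sum>j\<in>{0..<n}. B $$ (i, j) * cmod (v $ j))"
      unfolding w_def using norm_eigenvalue_mult_le[OF B nonneg v(1) ev i] i by simp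
    also have "\<dots> \<le> (\<Sum>j\<in>{0..<n}. C $$ (i, j) * w $ j)"
      unfolding w_def using le_entry i by (intro sum_mono) (simp add: mult_right_mono)
    also have "\<dots> = (C *\<^sub>v w) $ i" by (rule index_mult_mat_vec_sum[OF C w i, symmetric])
    finally show "cmod l * w $ i \<le> (C *\<^sub>v w) $ i" .
  qed (use j in \<open>auto simp: w_def\<close>)
qed

text \<open>Compare an eigenvector $v$ for $\rho(H)$ with $x$ at an index where $|v_i| / x_i$ is
maximal.\<close>

lemma rho_less_1_if_contracts:
  assumes H: "H \<in> carrier_mat n n" and n: "n > 0" and nonneg: "nonneg_mat H"
    and x: "x \<in> carrier_vec n" and x_pos: "\<And>i. i < n \<Longrightarrow> x $ i > 0"
    and contracts: "\<And>i. i < n \<Longrightarrow> (H *\<^sub>v x) $ i < x $ i"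
  shows "rho H < 1"
proof -
  obtain l v where rho: "rho H = cmod l" and v: "v \<in> carrier_vec n" "v \<noteq> 0\<^sub>v n"
    and ev: "map_mat complex_of_real H *\<^sub>v v = l \<cdot>\<^sub>v v" using rho_eigenvector[OF H n] by blast
  define f where "f i = cmod (v $ i) / x $ i" for i
  define t where "t = Max (f ` {0..<n})"
  have fin: "finite (f ` {0..<n})" and ne: "f ` {0..<n} \<noteq> {}" using n by auto
  obtain i where i: "i < n" "t = f i" using Max_in[OF fin ne] unfolding t_def by auto
  have t_max: "f j \<le> t" if "j < n" for j unfolding t_def using fin that by auto
  obtain j where j: "j < n" "v $ j \<noteq> 0" using nonzero_vec_entry[OF v] by blast
  have "f j > 0" using j x_pos unfolding f_def by auto
  then have t_pos: "t > 0" using t_max[OF j(1)] by auto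
  have bound: "cmod (v $ j) \<le> t * x $ j" if "j < n" for j
    using t_max[OF that] x_pos[OF that] unfolding f_def by (simp add: divide_le_eq)
  have "cmod l * cmod (v $ i) \<le> (\<Sum>j\<in>{0..<n}. H $$ (i, j) * cmod (v $ j))"
    by (rule norm_eigenvalue_mult_le[OF H nonneg v(1) ev i(1)])
  also have "\<dots> \<le> (\<Sum>j\<in>{0..<n}. H $$ (i, j) * (t * x $ j))"
    using nonneg_matD[OF nonneg H i(1)] bound by (intro sum_mono mult_left_mono) auto
  also have "\<dots> = t * (H *\<^sub>v x) $ i"
    by (simp add: index_mult_mat_vec_sum[OF H x i(1)] sum_distrib_left algebra_simps)
  also have "\<dots> < t * x $ i" using contracts[OF i(1)] t_pos by simp
  also have "\<dots> = 1 * cmod (v $ i)" using i x_pos[OF i(1)] unfolding f_def by simp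
  finally have "cmod l < 1" by (rule mult_right_less_imp_less) simp
  then show ?thesis using rho by simp
qed

section \<open>Weak regular splittings and multisplittings\<close>

lemma weak_regular_splitting_carrier:
  assumes "weak_regular_splitting n A U V"
  shows "A \<in> carrier_mat n n" "U \<in> carrier_mat n n" "V \<in> carrier_mat n n"
    "inv_mat U \<in> carrier_mat n n"
  using assms inv_mat_inverse(1)[of U n] unfolding weak_regular_splitting_def by auto

lemma weak_regular_splitting_inv_mat:
  assumes "weak_regular_splitting n A U V"
  shows "U * inv_mat U = 1\<^sub>m n" "inv_mat U * U = 1\<^sub>m n"
  using assms inv_mat_inverse(2,3)[of U n] unfolding weak_regular_splitting_def by auto

lemma weak_regular_splitting_iteration_carrier:
  assumes "weak_regular_splitting n A U V"
  shows "inv_mat U * V \<in> carrier_mat n n"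
  using weak_regular_splitting_carrier(4,3)[OF assms] by (rule mult_carrier_mat)

lemma weak_regular_splitting_iteration_eq:
  assumes s: "weak_regular_splitting n A U V"
  shows "inv_mat U * V = 1\<^sub>m n - inv_mat U * A"
proof -
  note carrier = weak_regular_splitting_carrier[OF s]
  have "V = U - A" using s carrier unfolding weak_regular_splitting_def by (intro eq_matI) auto
  then show ?thesis
    using mult_minus_distrib_mat[OF carrier(4,2,1)] weak_regular_splitting_inv_mat(2)[OF s] by simp
qed

lemma weak_regular_splitting_iteration_mult_vec:
  assumes s: "weak_regular_splitting n A U V" and x: "x \<in> carrier_vec n"
  shows "(inv_mat U * V) *\<^sub>v x = x - inv_mat U *\<^sub>v (A *\<^sub>v x)"
proof -
  note carrier = weak_regular_splitting_carrier[OF s]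
  have "(inv_mat U * V) *\<^sub>v x = 1\<^sub>m n *\<^sub>v x - (inv_mat U * A) *\<^sub>v x"
    unfolding weak_regular_splitting_iteration_eq[OF s]
    by (rule minus_mult_distrib_mat_vec[OF one_carrier_mat mult_carrier_mat[OF carrier(4,1)] x])
  then show ?thesis using assoc_mult_mat_vec[OF carrier(4,1) x] x by simp
qed

text \<open>The key identity is $U_1^{-1} - U_2^{-1} = U_1^{-1}(U_2 - U_1)U_2^{-1}$, with
$U_2 - U_1 = V_2 - V_1 \ge 0$.\<close>

lemma weak_regular_splitting_iteration_mono:
  assumes s1: "weak_regular_splitting n A U1 V1" and s2: "weak_regular_splitting n A U2 V2"
    and le: "V1 \<le> V2" and A_nonneg: "nonneg_mat A"
  shows "inv_mat U1 * V1 \<le> inv_mat U2 * V2"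
proof -
  note c1 = weak_regular_splitting_carrier[OF s1] and c2 = weak_regular_splitting_carrier[OF s2]
  let ?W1 = "inv_mat U1" and ?W2 = "inv_mat U2"
  have A: "A \<in> carrier_mat n n" and U1: "U1 \<in> carrier_mat n n" and U2: "U2 \<in> carrier_mat n n"
    and W1: "?W1 \<in> carrier_mat n n" and W2: "?W2 \<in> carrier_mat n n"
    using c1 c2 by auto
  have D: "U2 - U1 \<in> carrier_mat n n" using U1 U2 by auto
  have D_nonneg: "nonneg_mat (U2 - U1)"
    unfolding nonneg_mat_def
  proof (intro allI impI)
    fix i j assume "i < dim_row (U2 - U1)" "j < dim_col (U2 - U1)"
    then have ij: "i < n" "j < n" using U1 by auto
    have "U1 - V1 = U2 - V2" using s1 s2 unfolding weak_regular_splitting_def by auto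
    then have "(U1 - V1) $$ (i, j) = (U2 - V2) $$ (i, j)" by simp
    then have "U1 $$ (i, j) - V1 $$ (i, j) = U2 $$ (i, j) - V2 $$ (i, j)"
      using ij carrier_matD[OF c1(3)] carrier_matD[OF c2(3)] by simp
    moreover have "V1 $$ (i, j) \<le> V2 $$ (i, j)"
      using less_eq_matD[OF le] ij carrier_matD[OF c1(3)] by simp
    ultimately show "(U2 - U1) $$ (i, j) \<ge> 0" using ij carrier_matD[OF U1] by simp
  qed
  have "?W1 * (U2 - U1) * ?W2 = (?W1 * U2 - 1\<^sub>m n) * ?W2"
    using mult_minus_distrib_mat[OF W1 U2 U1] weak_regular_splitting_inv_mat(2)[OF s1] by simp
  also have "\<dots> = ?W1 * U2 * ?W2 - ?W2"
    using minus_mult_distrib_mat[OF mult_carrier_mat[OF W1 U2] one_carrier_mat W2] W2 by simp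
  also have "?W1 * U2 * ?W2 = ?W1"
    using assoc_mult_mat[OF W1 U2 W2] weak_regular_splitting_inv_mat(1)[OF s2] W1 by simp
  finally have diff: "?W1 * (U2 - U1) * ?W2 = ?W1 - ?W2" .
  have W_nonneg: "nonneg_mat ?W1" "nonneg_mat ?W2"
    using s1 s2 unfolding weak_regular_splitting_def by auto
  have "nonneg_mat (?W1 * (U2 - U1))" by (rule nonneg_mat_mult[OF W1 D W_nonneg(1) D_nonneg])
  then have "nonneg_mat (?W1 * (U2 - U1) * ?W2)"
    by (rule nonneg_mat_mult[OF mult_carrier_mat[OF W1 D] W2 _ W_nonneg(2)])
  then have diff_nonneg: "nonneg_mat ((?W1 - ?W2) * A)"
    unfolding diff[symmetric]
    by (rule nonneg_mat_mult[OF mult_carrier_mat[OF mult_carrier_mat[OF W1 D] W2] A _ A_nonneg])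
  have entry: "(?W2 * A) $$ (i, j) \<le> (?W1 * A) $$ (i, j)" if "i < n" "j < n" for i j
  proof -
    have "((?W1 - ?W2) * A) $$ (i, j) \<ge> 0"
      by (rule nonneg_matD[OF diff_nonneg mult_carrier_mat[OF minus_carrier_mat[OF W2] A] that])
    moreover have "((?W1 - ?W2) * A) $$ (i, j) = (?W1 * A) $$ (i, j) - (?W2 * A) $$ (i, j)"
      unfolding minus_mult_distrib_mat[OF W1 W2 A]
      using that carrier_matD[OF W2] carrier_matD[OF A] by simp
    ultimately show ?thesis by linarith
  qed
  show ?thesis
  proof (rule less_eq_matI[OF weak_regular_splitting_iteration_carrier[OF s1]
        weak_regular_splitting_iteration_carrier[OF s2]])
    fix i j assume ij: "i < n" "j < n"
    have "(?W1 * V1) $$ (i, j) = 1\<^sub>m n $$ (i, j) - (?W1 * A) $$ (i, j)"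
      and "(?W2 * V2) $$ (i, j) = 1\<^sub>m n $$ (i, j) - (?W2 * A) $$ (i, j)"
      unfolding weak_regular_splitting_iteration_eq[OF s1] weak_regular_splitting_iteration_eq[OF s2]
      using ij carrier_matD[OF W1] carrier_matD[OF W2] carrier_matD[OF A] by simp_all
    with entry[OF ij] show "(?W1 * V1) $$ (i, j) \<le> (?W2 * V2) $$ (i, j)" by linarith
  qed
qed

lemma weak_regular_multisplittingD:
  assumes "weak_regular_multisplitting n A p U V E" "k < p"
  shows "weak_regular_splitting n A (U k) (V k)" "E k \<in> carrier_mat n n" "diagonal_mat (E k)"
    "nonneg_mat (E k)"
  using assms unfolding weak_regular_multisplitting_def by auto

lemma iter_mat_carrier:
  assumes "weak_regular_multisplitting n A p U V E"
  shows "iter_mat n p U V E \<in> carrier_mat n n"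
  unfolding iter_mat_def
proof (rule msum_carrier)
  fix k assume "k < p"
  note D = weak_regular_multisplittingD[OF assms this]
  show "E k * (inv_mat (U k) * V k) \<in> carrier_mat n n"
    by (rule mult_carrier_mat[OF D(2) weak_regular_splitting_iteration_carrier[OF D(1)]])
qed

lemma index_iter_mat:
  assumes M: "weak_regular_multisplitting n A p U V E" and i: "i < n" and j: "j < n"
  shows "iter_mat n p U V E $$ (i, j)
    = (\<Sum>k<p. E k $$ (i, i) * (inv_mat (U k) * V k) $$ (i, j))"
proof -
  note D = weak_regular_multisplittingD[OF M]
  have P: "inv_mat (U k) * V k \<in> carrier_mat n n" if "k < p" for k
    using weak_regular_splitting_iteration_carrier D(1)[OF that] .
  have "E k * (inv_mat (U k) * V k) \<in> carrier_mat n n"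
    and "(E k * (inv_mat (U k) * V k)) $$ (i, j) = E k $$ (i, i) * (inv_mat (U k) * V k) $$ (i, j)"
    if "k < p" for k
    using index_mult_diagonal_mat[OF D(2,3)[OF that] P[OF that] i j] D(2)[OF that] P[OF that]
    by auto
  then show ?thesis
    unfolding iter_mat_def using index_msum[of p _ n i j] i j by simp
qed

lemma multisplitting_weight_nonneg:
  "weak_regular_multisplitting n A p U V E \<Longrightarrow> k < p \<Longrightarrow> i < n \<Longrightarrow> E k $$ (i, i) \<ge> 0"
  using weak_regular_multisplittingD(2,4) nonneg_matD by blast

lemma multisplitting_weight_sum:
  assumes M: "weak_regular_multisplitting n A p U V E" and i: "i < n"
  shows "(\<Sum>k<p. E k $$ (i, i)) = 1"
proof -
  have "\<And>k. k < p \<Longrightarrow> E k \<in> carrier_mat n n" and "msum n E p = 1\<^sub>m n"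
    using M unfolding weak_regular_multisplitting_def by auto
  then show ?thesis using index_msum[of p E n i i] i by simp
qed

lemma iter_mat_nonneg:
  assumes M: "weak_regular_multisplitting n A p U V E"
  shows "nonneg_mat (iter_mat n p U V E)"
  unfolding nonneg_mat_def
proof (intro allI impI)
  fix i j assume "i < dim_row (iter_mat n p U V E)" "j < dim_col (iter_mat n p U V E)"
  then have ij: "i < n" "j < n" using iter_mat_carrier[OF M] by auto
  have "(inv_mat (U k) * V k) $$ (i, j) \<ge> 0" if "k < p" for k
    using weak_regular_multisplittingD(1)[OF M that] ij
      weak_regular_splitting_iteration_carrier[OF weak_regular_multisplittingD(1)[OF M that]]
    unfolding weak_regular_splitting_def by (blast intro: nonneg_matD)
  then show "iter_mat n p U V E $$ (i, j) \<ge> 0"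
    unfolding index_iter_mat[OF M ij]
    by (auto intro!: sum_nonneg mult_nonneg_nonneg multisplitting_weight_nonneg[OF M _ ij(1)])
qed

lemma iter_mat_mono:
  assumes M1: "weak_regular_multisplitting n A p U1 V1 E"
    and M2: "weak_regular_multisplitting n A p U2 V2 E"
    and le: "\<And>k. k < p \<Longrightarrow> V1 k \<le> V2 k" and A_nonneg: "nonneg_mat A"
  shows "iter_mat n p U1 V1 E \<le> iter_mat n p U2 V2 E"
proof -
  have "(inv_mat (U1 k) * V1 k) $$ (i, j) \<le> (inv_mat (U2 k) * V2 k) $$ (i, j)"
    if "k < p" "i < n" "j < n" for k i j
  proof -
    have s1: "weak_regular_splitting n A (U1 k) (V1 k)"
      and s2: "weak_regular_splitting n A (U2 k) (V2 k)"
      using weak_regular_multisplittingD(1) M1 M2 that(1) by auto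
    show ?thesis
      by (rule less_eq_matD[OF weak_regular_splitting_iteration_mono[OF s1 s2 le[OF that(1)] A_nonneg]])
        (use weak_regular_splitting_iteration_carrier[OF s1] that(2,3) in auto)
  qed
  then show ?thesis
    using iter_mat_carrier[OF M1] iter_mat_carrier[OF M2]
    by (intro less_eq_matI[of _ n n])
      (auto simp: index_iter_mat[OF M1] index_iter_mat[OF M2]
        intro!: sum_mono mult_left_mono multisplitting_weight_nonneg[OF M1])
qed

lemma index_iter_mat_mult_vec:
  assumes M: "weak_regular_multisplitting n A p U V E" and x: "x \<in> carrier_vec n" and i: "i < n"
  shows "(iter_mat n p U V E *\<^sub>v x) $ i
    = (\<Sum>k<p. E k $$ (i, i) * ((inv_mat (U k) * V k) *\<^sub>v x) $ i)"
proof -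
  have P: "inv_mat (U k) * V k \<in> carrier_mat n n" if "k < p" for k
    using weak_regular_splitting_iteration_carrier weak_regular_multisplittingD(1)[OF M that] .
  have "(iter_mat n p U V E *\<^sub>v x) $ i
      = (\<Sum>j\<in>{0..<n}. \<Sum>k<p. E k $$ (i, i) * ((inv_mat (U k) * V k) $$ (i, j) * x $ j))"
    using index_mult_mat_vec_sum[OF iter_mat_carrier[OF M] x i] index_iter_mat[OF M i]
    by (simp add: sum_distrib_right mult.assoc)
  also have "\<dots> = (\<Sum>k<p. E k $$ (i, i) * (\<Sum>j\<in>{0..<n}. (inv_mat (U k) * V k) $$ (i, j) * x $ j))"
    by (subst sum.swap) (simp add: sum_distrib_left)
  also have "\<dots> = (\<Sum>k<p. E k $$ (i, i) * ((inv_mat (U k) * V k) *\<^sub>v x) $ i)"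
  proof (intro sum.cong refl)
    fix k assume "k \<in> {..<p}"
    then show "E k $$ (i, i) * (\<Sum>j\<in>{0..<n}. (inv_mat (U k) * V k) $$ (i, j) * x $ j)
        = E k $$ (i, i) * ((inv_mat (U k) * V k) *\<^sub>v x) $ i"
      using index_mult_mat_vec_sum[OF P x i, of k] by simp
  qed
  finally show ?thesis .
qed

text \<open>The positive vector $x = A^{-1}e$ satisfies $H x = x - \sum_k E_k U_k^{-1} e$, and every
row sum of $U_k^{-1}$ is positive.\<close>

lemma iter_mat_contracts:
  assumes M: "weak_regular_multisplitting n A p U V E" and A: "A \<in> carrier_mat n n"
    and A_inv: "invertible_mat A" and i: "i < n"
  defines "x \<equiv> inv_mat A *\<^sub>v vec n (\<lambda>_. 1)"
  shows "(iter_mat n p U V E *\<^sub>v x) $ i < x $ i"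
proof -
  note A_inverse = inv_mat_inverse[OF A_inv A]
  have x: "x \<in> carrier_vec n" unfolding x_def using A_inverse by auto
  have Ax: "A *\<^sub>v x = vec n (\<lambda>_. 1)"
    unfolding x_def using assoc_mult_mat_vec[OF A A_inverse(1)] A_inverse(2) by simp
  define y where "y k = (inv_mat (U k) *\<^sub>v vec n (\<lambda>_. 1)) $ i" for k
  note s = weak_regular_multisplittingD(1)[OF M]
  have y_pos: "y k > 0" if "k < p" for k
    unfolding y_def using s[OF that] weak_regular_splitting_carrier[OF s[OF that]]
      weak_regular_splitting_inv_mat[OF s[OF that]]
    by (intro nonneg_mat_row_sum_pos[OF _ _ _ _ i]) (auto simp: weak_regular_splitting_def)
  have "(iter_mat n p U V E *\<^sub>v x) $ i = (\<Sum>k<p. E k $$ (i, i) * (x $ i - y k))"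
    unfolding index_iter_mat_mult_vec[OF M x i]
  proof (intro sum.cong refl arg_cong[where f = "(*) _"])
    fix k assume "k \<in> {..<p}"
    then have inv: "inv_mat (U k) \<in> carrier_mat n n"
      using weak_regular_splitting_carrier(4)[OF s] by simp
    have "(inv_mat (U k) * V k) *\<^sub>v x = x - inv_mat (U k) *\<^sub>v vec n (\<lambda>_. 1)"
      using weak_regular_splitting_iteration_mult_vec[OF s x] \<open>k \<in> {..<p}\<close> Ax by simp
    then show "((inv_mat (U k) * V k) *\<^sub>v x) $ i = x $ i - y k"
      unfolding y_def using inv i by simp
  qed
  also have "\<dots> = (\<Sum>k<p. E k $$ (i, i)) * x $ i - (\<Sum>k<p. E k $$ (i, i) * y k)"
    by (simp add: right_diff_distrib sum_subtractf sum_distrib_right)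
  also have "\<dots> = x $ i - (\<Sum>k<p. E k $$ (i, i) * y k)"
    using multisplitting_weight_sum[OF M i] by simp
  also have "\<dots> < x $ i"
  proof -
    obtain k where k: "k < p" "E k $$ (i, i) \<noteq> 0"
    proof (rule ccontr)
      assume "\<not> thesis"
      then have "\<forall>k<p. E k $$ (i, i) = 0" using that by blast
      then show False using multisplitting_weight_sum[OF M i] by simp
    qed
    then have "0 < E k $$ (i, i) * y k"
      using y_pos multisplitting_weight_nonneg[OF M _ i] by (simp add: order_le_neq_trans)
    then have "0 < (\<Sum>k<p. E k $$ (i, i) * y k)"
      using k(1) y_pos multisplitting_weight_nonneg[OF M _ i]
      by (intro sum_pos2[of "{..<p}" k]) (auto intro!: mult_nonneg_nonneg simp: less_imp_le)
    then show ?thesis by simp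
  qed
  finally show ?thesis .
qed

lemma rho_iter_mat_less_1:
  assumes M: "weak_regular_multisplitting n A p U V E" and n: "n > 0"
    and A: "A \<in> carrier_mat n n" and A_inv: "invertible_mat A"
    and A_inv_nonneg: "nonneg_mat (inv_mat A)"
  shows "rho (iter_mat n p U V E) < 1"
proof (rule rho_less_1_if_contracts[OF iter_mat_carrier[OF M] n iter_mat_nonneg[OF M]])
  note A_inverse = inv_mat_inverse[OF A_inv A]
  show "inv_mat A *\<^sub>v vec n (\<lambda>_. 1) \<in> carrier_vec n" using A_inverse by auto
  show "(inv_mat A *\<^sub>v vec n (\<lambda>_. 1)) $ i > 0" if "i < n" for i
    by (rule nonneg_mat_row_sum_pos[OF A_inverse(1) A A_inverse(3) A_inv_nonneg that])
  show "(iter_mat n p U V E *\<^sub>v (inv_mat A *\<^sub>v vec n (\<lambda>_. 1))) $ i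
      < (inv_mat A *\<^sub>v vec n (\<lambda>_. 1)) $ i" if "i < n" for i
    by (rule iter_mat_contracts[OF M A A_inv that])
qed

theorem corollary5p12:
  fixes n p :: nat and A :: "real mat" and U1 V1 U2 V2 E :: "nat \<Rightarrow> real mat"
  assumes "n > 0"
    and "A \<in> carrier_mat n n"
    and "invertible_mat A"
    and "nonneg_mat A"
    and "nonneg_mat (inv_mat A)"
    and "weak_regular_multisplitting n A p U1 V1 E"
    and "weak_regular_multisplitting n A p U2 V2 E"
    and "\<forall>k < p. V2 k \<ge> V1 k"
  shows "rho (iter_mat n p U1 V1 E) \<le> rho (iter_mat n p U2 V2 E) \<and>
         rho (iter_mat n p U2 V2 E) < 1"
proof
  show "rho (iter_mat n p U1 V1 E) \<le> rho (iter_mat n p U2 V2 E)"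
    using rho_mono[OF iter_mat_carrier[OF assms(6)] assms(1) iter_mat_nonneg[OF assms(6)]
        iter_mat_mono[OF assms(6,7) _ assms(4)]] assms(8) by simp
  show "rho (iter_mat n p U2 V2 E) < 1"
    by (rule rho_iter_mat_less_1[OF assms(7,1,2,3,5)])
qed

end
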